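(* Let $\alpha_1,\dots,\alpha_n$ be real numbers and $\pi\in S_n$ a permutation with $\alpha_{\pi(1)}>\alpha_{\pi(2)}>\dots>\alpha_{\pi(n)}$. Let $w=s_{\ell_1}\cdots s_{\ell_k}$ be a reduced word for a glide in $\hat S_n$, and in the wiring diagram of $|w$ number the wires so that wire $i$ starts in position $i$; give each crossing the parameter $\alpha_{\mathrm{up}}-\alpha_{\mathrm{low}}$, where $\mathrm{up},\mathrm{low}$ are the numbers of its upper and lower wires. Then all crossing parameters are positive if and only if $t(w)\in\pi(\mathfrak C_{id})$, i.e. if and only if a (equivalently any) representative $(t_1,\dots,t_n)\in\mathbb Z^n$ of $t(w)$ satisfies $t_{\pi(1)}\ge t_{\pi(2)}\ge\dots\ge t_{\pi(n)}$.
   Context: $\hat S_n$: generators $s_0,\dots,s_{n-1}$ (indices mod $n$), relations $s_i^2=1$, $s_is_js_i=s_js_is_j$ if $i-j\equiv\pm1$, $s_is_j=s_js_i$ if $i-j\not\equiv0,\pm1\pmod n$. $\phi:\hat S_n\to S_n$, $s_i\mapsto(i\ i+1)$ for $1\le i\le n-1$, $s_0\mapsto(1\ n)$; a glide of offset $k\in\{0,\dots,n-1\}$ is $g$ with $\phi(g)(j)\equiv j+k\pmod n$. Wiring diagram: the word is drawn left to right on a cylinder with wires in positions $1,\dots,n$ (mod $n$); $s_i$ is a crossing of positions $i,i+1$ ($s_0$: positions $n$ and $1$); the upper wire of $s_i$ passes from position $i+1$ to $i$ (for $s_0$: from position $1$ to $n$). Universal cover: positions are integers, $s_i$ lifting to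 crossings of $p,p+1$ for all $p\equiv i\pmod n$, lifted wires labelled by their starting integer positions. A chamber's label is $(\mathbf s_1,\dots,\mathbf s_n)$, $\mathbf s_i=\lceil\max\{b\in S: b\equiv i\bmod n\}/n\rceil$ where $S$ is the set of labels of wires passing below it. The trajectory $t(w)\in\mathbb Z^n/\mathbb Z(1,\dots,1)$ is the label of the chamber directly above the wire labelled $1$ at the right end of the diagram minus the label of the chamber directly above wire $1$ at the left end. The dominant chamber is $\mathfrak C_{id}=\{x: x_1\ge x_2\ge\dots\ge x_n\}$. *)

theory Defs
  imports Complex_Main "HOL-Combinatorics.Transposition" "HOL-Combinatorics.Permutations"
begin

text \<open>Words in the generators s_0,...,s_{n-1} of the affine symmetric group are lists of
  indices in {0..n-1}.\<close>

definition word :: "nat \<Rightarrow> nat list \<Rightarrow> bool" where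
  "word n w \<longleftrightarrow> (\<forall>l\<in>set w. l < n)"

inductive hat_step :: "nat \<Rightarrow> nat list \<Rightarrow> nat list \<Rightarrow> bool" for n where
  square: "hat_step n (a @ [i, i] @ b) (a @ b)"
| braid: "(int i - int j) mod int n \<in> {1, int n - 1} \<Longrightarrow>
          hat_step n (a @ [i, j, i] @ b) (a @ [j, i, j] @ b)"
| comm: "(int i - int j) mod int n \<notin> {0, 1, int n - 1} \<Longrightarrow>
          hat_step n (a @ [i, j] @ b) (a @ [j, i] @ b)"

definition hat_eq :: "nat \<Rightarrow> nat list \<Rightarrow> nat list \<Rightarrow> bool" where
  "hat_eq n = (sup (hat_step n) (hat_step n)\<inverse>\<inverse>)\<^sup>*\<^sup>*"

definition reduced_word :: "nat \<Rightarrow> nat list \<Rightarrow> bool" where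
  "reduced_word n w \<longleftrightarrow> word n w \<and>
     (\<forall>w'. word n w' \<and> hat_eq n w w' \<longrightarrow> length w \<le> length w')"

text \<open>The homomorphism phi to S_n (permutations of {1..n}); a word maps to the composite
  phi(s_{l_1}) o ... o phi(s_{l_k}).\<close>
definition phi_gen :: "nat \<Rightarrow> nat \<Rightarrow> nat \<Rightarrow> nat" where
  "phi_gen n i = (if i = 0 then transpose 1 n else transpose i (Suc i))"

definition phi_word :: "nat \<Rightarrow> nat list \<Rightarrow> nat \<Rightarrow> nat" where
  "phi_word n w = foldr (\<lambda>i f. phi_gen n i \<circ> f) w id"

definition is_glide :: "nat \<Rightarrow> nat list \<Rightarrow> bool" where
  "is_glide n w \<longleftrightarrow> (\<exists>k<n. \<forall>j\<in>{1..n}. phi_word n w j mod n = (j + k) mod n)"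

text \<open>Wiring diagram on the universal cover: a state is a map from integer positions to the
  label (integer starting position) of the lifted wire currently there.\<close>
definition cross :: "nat \<Rightarrow> nat \<Rightarrow> (int \<Rightarrow> int) \<Rightarrow> int \<Rightarrow> int" where
  "cross n i W = (\<lambda>p. if p mod int n = int i mod int n then W (p + 1)
                     else if (p - 1) mod int n = int i mod int n then W (p - 1)
                     else W p)"

definition wires_after :: "nat \<Rightarrow> nat list \<Rightarrow> int \<Rightarrow> int" where
  "wires_after n ws = foldl (\<lambda>W i. cross n i W) id ws"

text \<open>Number (in 1..n) of the wire on the cylinder corresponding to the lifted wire b.\<close>
definition cyl_wire :: "nat \<Rightarrow> int \<Rightarrow> nat" where
  "cyl_wire n b = nat ((b - 1) mod int n) + 1"

text \<open>The crossing of s_i (on the cylinder) is between positions p and p+1 with p = i,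
  resp. p = n for s_0; the upper wire passes from position p+1 to p.\<close>
definition cross_pos :: "nat \<Rightarrow> nat \<Rightarrow> int" where
  "cross_pos n i = (if i = 0 then int n else int i)"

definition upper_wire :: "nat \<Rightarrow> nat list \<Rightarrow> nat \<Rightarrow> nat" where
  "upper_wire n w t = cyl_wire n (wires_after n (take t w) (cross_pos n (w ! t) + 1))"

definition lower_wire :: "nat \<Rightarrow> nat list \<Rightarrow> nat \<Rightarrow> nat" where
  "lower_wire n w t = cyl_wire n (wires_after n (take t w) (cross_pos n (w ! t)))"

text \<open>Parameter alpha_up - alpha_low of the t-th crossing (t counted from 0).\<close>
definition crossing_param :: "nat \<Rightarrow> (nat \<Rightarrow> real) \<Rightarrow> nat list \<Rightarrow> nat \<Rightarrow> real" where
  "crossing_param n \<alpha> w t = \<alpha> (upper_wire n w t) - \<alpha> (lower_wire n w t)"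

text \<open>Label of the chamber between positions q and q+1 (directly above the wire at
  position q) in state W; the wires passing below it are those at positions \<le> q.\<close>
definition chamber_label :: "nat \<Rightarrow> (int \<Rightarrow> int) \<Rightarrow> int \<Rightarrow> nat \<Rightarrow> int" where
  "chamber_label n W q i =
     \<lceil>real_of_int (GREATEST b. b \<in> W ` {..q} \<and> b mod int n = int i mod int n) / real n\<rceil>"

text \<open>A representative (indexed by 1..n) of the trajectory t(w).\<close>
definition traj :: "nat \<Rightarrow> nat list \<Rightarrow> nat \<Rightarrow> int" where
  "traj n w i =
     (let Wl = (id :: int \<Rightarrow> int); Wr = wires_after n w;
          ql = (THE q. Wl q = 1); qr = (THE q. Wr q = 1)
      in chamber_label n Wr qr i - chamber_label n Wl ql i)"

end

theory Submission
  imports Defs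
begin

text \<open>
  Lift the wiring diagram to the universal cover and let \<open>D b\<close> be the displacement of the lifted
  wire \<open>b\<close> from the left to the right end. \<open>D\<close> is \<open>n\<close>-periodic, and for a glide all values
  \<open>D b\<close> are congruent modulo \<open>n\<close>; the trajectory is \<open>t\<^sub>i = (D 1 - D i) / n\<close>. Hence
  \<open>t\<^bsub>\<pi> 1\<^esub> \<ge> \<dots> \<ge> t\<^bsub>\<pi> n\<^esub>\<close> says exactly that \<open>\<alpha> a > \<alpha> b\<close> implies \<open>D a \<le> D b\<close>.

  If \<open>D a > D b\<close>, then \<open>D a \<ge> D b + n\<close>, so lifts of \<open>a\<close> and \<open>b\<close> that start less than \<open>n\<close>
  apart end in the opposite order; the first crossing between them has \<open>b\<close> on top, a negative
  parameter if \<open>\<alpha> a > \<alpha> b\<close>. Conversely, in a reduced word every crossing brings a smaller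
  label below a larger one (otherwise the exchange property shortens the word), so two lifted
  wires never cross back; a crossing with upper wire \<open>u\<close> and lower wire \<open>l\<close> therefore forces
  \<open>D u < D l\<close>, and the monotonicity gives \<open>\<alpha> u > \<alpha> l\<close>.
\<close>

section \<open>Crossings on the universal cover\<close>

lemma int_dvd_small_iff: "\<bar>x\<bar> < int n \<Longrightarrow> int n dvd x \<longleftrightarrow> x = 0"
  using dvd_imp_le_int[of x "int n"] by fastforce

lemma dvd_shift_iff: "(m::int) dvd (x - y) \<Longrightarrow> m dvd (x - c) \<longleftrightarrow> m dvd (y - c)"
  using dvd_add_right_iff[of m "x - y" "y - c"] by simp

lemma int_mod_eq_iff_dvd: "0 \<le> c \<Longrightarrow> c < m \<Longrightarrow> x mod m = c \<longleftrightarrow> m dvd (x - c)"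
  for c m x :: int
  using mod_eq_dvd_iff[of x m c] by simp

definition cover_swap :: "nat \<Rightarrow> nat \<Rightarrow> int \<Rightarrow> int" where
  "cover_swap n i p = (if int n dvd (p - int i) then p + 1
                       else if int n dvd (p - 1 - int i) then p - 1 else p)"

lemma cross_eq_comp_cover_swap: "cross n i W = W \<circ> cover_swap n i"
  by (rule ext) (simp add: cross_def cover_swap_def mod_eq_dvd_iff)

lemma cover_swap_at: "int n dvd (p - int i) \<Longrightarrow> cover_swap n i p = p + 1"
  by (simp add: cover_swap_def)

lemma cover_swap_at_Suc:
  assumes "2 \<le> n" and "int n dvd (p - int i)"
  shows "cover_swap n i (p + 1) = p"
proof -
  have "\<not> int n dvd (p - int i + 1)"
    using assms int_dvd_small_iff[of 1 n] by (simp add: dvd_add_right_iff)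
  then show ?thesis using assms by (simp add: cover_swap_def algebra_simps)
qed

lemma cover_swap_away:
  assumes "3 \<le> n" and "int n dvd (p - int i)"
  shows "cover_swap n i (p + 2) = p + 2" and "cover_swap n i (p - 1) = p - 1"
proof -
  have "\<not> int n dvd (p - int i + d)" if "d \<in> {-2, -1, 1, 2}" for d
    using assms that int_dvd_small_iff[of d n] by (auto simp: dvd_add_right_iff)
  from this[of 2] this[of 1] this[of "-1"] this[of "-2"] show
    "cover_swap n i (p + 2) = p + 2" "cover_swap n i (p - 1) = p - 1"
    by (simp_all add: cover_swap_def algebra_simps)
qed

lemma cover_swap_involution:
  assumes "2 \<le> n"
  shows "cover_swap n i (cover_swap n i p) = p"
proof -
  consider "int n dvd (p - int i)" | "int n dvd (p - 1 - int i)"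
    | "\<not> int n dvd (p - int i)" "\<not> int n dvd (p - 1 - int i)" by blast
  then show ?thesis
  proof cases
    case 1
    then show ?thesis by (simp add: cover_swap_at cover_swap_at_Suc[OF assms])
  next
    case 2
    then have "cover_swap n i (p - 1 + 1) = p - 1" "cover_swap n i (p - 1) = p"
      using cover_swap_at cover_swap_at_Suc[OF assms] by force+
    then show ?thesis by simp
  qed (simp add: cover_swap_def)
qed

lemma cover_swap_shift:
  assumes "int n dvd (q - p)"
  shows "cover_swap n i q = cover_swap n i p + (q - p)"
proof -
  have "int n dvd (q - c) \<longleftrightarrow> int n dvd (p - c)" for c
    using dvd_add_right_iff[OF assms, of "p - c"] by simp
  from this[of "int i"] this[of "1 + int i"] show ?thesis
    by (simp add: cover_swap_def algebra_simps)
qed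

lemma cover_swap_reverses_only_adjacent:
  assumes "p < q" and "cover_swap n i q < cover_swap n i p"
  shows "q = p + 1 \<and> int n dvd (p - int i)"
  using assms by (auto simp: cover_swap_def split: if_splits)

lemma far_letters_not_dvd:
  assumes "2 \<le> n" and "(int i - int j) mod int n \<notin> {0, 1, int n - 1}"
  shows "\<not> int n dvd (int i - int j)" "\<not> int n dvd (int i - int j - 1)"
    "\<not> int n dvd (int i - int j + 1)"
proof -
  have "\<not> int n dvd (int i - int j - c)" if "c \<in> {-1, 0, 1}" for c
  proof -
    have "(int i - int j) mod int n \<noteq> c mod int n"
      using assms that zmod_minus1[of "int n"] by auto
    then show ?thesis by (simp add: mod_eq_dvd_iff)
  qed
  from this[of 0] this[of 1] this[of "-1"]
  show "\<not> int n dvd (int i - int j)" "\<not> int n dvd (int i - int j - 1)"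
    "\<not> int n dvd (int i - int j + 1)" by simp_all
qed

lemma far_letters_sym:
  assumes "2 \<le> n" and far: "(int i - int j) mod int n \<notin> {0, 1, int n - 1}"
  shows "(int j - int i) mod int n \<notin> {0, 1, int n - 1}"
proof -
  define m where "m = (int i - int j) mod int n"
  have "m < int n" "m \<noteq> 0" using assms by (auto simp: m_def)
  moreover have "(int j - int i) mod int n = int n - m"
    using zmod_zminus1_eq_if[of "int i - int j" "int n"] \<open>m \<noteq> 0\<close> by (simp add: m_def)
  ultimately show ?thesis using far unfolding m_def by auto
qed

lemma cover_swap_far_fixes:
  assumes n: "2 \<le> n" and far: "(int i - int j) mod int n \<notin> {0, 1, int n - 1}"
    and "int n dvd (r - int i) \<or> int n dvd (r - 1 - int i)"
  shows "cover_swap n j r = r \<and> cover_swap n j (cover_swap n i r) = cover_swap n i r"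
  using assms(3)
proof
  note ij = far_letters_not_dvd[OF n far]
  assume h: "int n dvd (r - int i)"
  show ?thesis
    using cover_swap_at[OF h] dvd_shift_iff[OF h, of "int j"] dvd_shift_iff[OF h, of "int j + 1"]
      dvd_shift_iff[OF h, of "int j - 1"] ij
    by (simp add: cover_swap_def algebra_simps)
next
  note ij = far_letters_not_dvd[OF n far]
  assume h: "int n dvd (r - 1 - int i)"
  have swap: "cover_swap n i r = r - 1"
    using h dvd_shift_iff[OF h, of "int i - 1"] ij(1) by (auto simp: cover_swap_def)
  show ?thesis unfolding swap
    using dvd_shift_iff[OF h, of "int j"] dvd_shift_iff[OF h, of "int j + 1"]
      dvd_shift_iff[OF h, of "int j - 1"] ij
    by (simp add: cover_swap_def[of n j] algebra_simps)
qed

lemma cover_swap_commute: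
  assumes n: "2 \<le> n" and far: "(int i - int j) mod int n \<notin> {0, 1, int n - 1}"
  shows "cover_swap n i (cover_swap n j r) = cover_swap n j (cover_swap n i r)"
proof -
  consider "int n dvd (r - int i) \<or> int n dvd (r - 1 - int i)"
    | "int n dvd (r - int j) \<or> int n dvd (r - 1 - int j)"
    | "\<not> int n dvd (r - int i)" "\<not> int n dvd (r - 1 - int i)"
      "\<not> int n dvd (r - int j)" "\<not> int n dvd (r - 1 - int j)"
    by blast
  then show ?thesis
  proof cases
    case 1
    then show ?thesis using cover_swap_far_fixes[OF n far] by auto
  next
    case 2
    then show ?thesis using cover_swap_far_fixes[OF n far_letters_sym[OF n far]] by auto
  qed (simp add: cover_swap_def)
qed

lemma cover_swap_adjacent_values:
  assumes "3 \<le> n" and a: "int n dvd (r - int a)" and b: "int n dvd (int b - int a - 1)"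
  shows "cover_swap n a r = r + 1" "cover_swap n a (r + 1) = r" "cover_swap n a (r + 2) = r + 2"
    and "cover_swap n b r = r" "cover_swap n b (r + 1) = r + 2" "cover_swap n b (r + 2) = r + 1"
proof -
  have b': "int n dvd (r + 1 - int b)"
    using dvd_diff[OF a b] by (simp add: algebra_simps)
  show "cover_swap n a r = r + 1" "cover_swap n a (r + 1) = r" "cover_swap n a (r + 2) = r + 2"
    using cover_swap_at[OF a] cover_swap_at_Suc[OF _ a] cover_swap_away(1)[OF assms(1) a]
      assms(1) by auto
  show "cover_swap n b r = r" "cover_swap n b (r + 1) = r + 2" "cover_swap n b (r + 2) = r + 1"
    using cover_swap_away(2)[OF assms(1) b'] cover_swap_at[OF b'] cover_swap_at_Suc[OF _ b']
      assms(1) by (auto simp: algebra_simps)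
qed

lemma cover_swap_braid:
  assumes "3 \<le> n" and b: "int n dvd (int b - int a - 1)"
  shows "cover_swap n a (cover_swap n b (cover_swap n a r))
       = cover_swap n b (cover_swap n a (cover_swap n b r))"
proof -
  consider r0 where "int n dvd (r0 - int a)" "r \<in> {r0, r0 + 1, r0 + 2}"
    | "\<not> int n dvd (r - int a)" "\<not> int n dvd (r - 1 - int a)" "\<not> int n dvd (r - 2 - int a)"
    by (metis diff_add_cancel insertCI)
  then show ?thesis
  proof cases
    case 1
    then show ?thesis using cover_swap_adjacent_values[OF assms(1) 1(1) b] by auto
  next
    case 2
    moreover have "\<not> int n dvd (r - int b)" "\<not> int n dvd (r - 1 - int b)"
      using 2 dvd_add[OF _ b, of "r - int b"] dvd_add[OF _ b, of "r - 1 - int b"]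
      by (auto simp: algebra_simps)
    ultimately have "cover_swap n a r = r" "cover_swap n b r = r"
      by (simp_all add: cover_swap_def)
    then show ?thesis by simp
  qed
qed

section \<open>Positions of lifted wires\<close>

definition position_after :: "nat \<Rightarrow> nat list \<Rightarrow> int \<Rightarrow> int" where
  "position_after n v = foldl (\<lambda>f i. cover_swap n i \<circ> f) id v"

lemma wires_after_Nil [simp]: "wires_after n [] = id"
  by (simp add: wires_after_def)

lemma wires_after_snoc [simp]: "wires_after n (v @ [i]) = wires_after n v \<circ> cover_swap n i"
  by (simp add: wires_after_def cross_eq_comp_cover_swap)

lemma position_after_Nil [simp]: "position_after n [] = id"
  by (simp add: position_after_def)

lemma position_after_snoc [simp]:
  "position_after n (v @ [i]) = cover_swap n i \<circ> position_after n v"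
  by (simp add: position_after_def)

lemma wires_after_append: "wires_after n (v @ w) = wires_after n v \<circ> wires_after n w"
  by (induction w rule: rev_induct) (simp_all flip: append_assoc add: comp_assoc)

lemma wires_after_Cons: "wires_after n (i # w) = cover_swap n i \<circ> wires_after n w"
  using wires_after_append[of n "[i]" w] wires_after_snoc[of n "[]" i] by simp

lemma wires_after_position_after: "2 \<le> n \<Longrightarrow> wires_after n v (position_after n v b) = b"
  by (induction v rule: rev_induct) (auto simp: cover_swap_involution)

lemma position_after_wires_after: "2 \<le> n \<Longrightarrow> position_after n v (wires_after n v p) = p"
  by (induction v arbitrary: p rule: rev_induct) (auto simp: cover_swap_involution)

lemma wires_after_shift:
  "int n dvd (q - p) \<Longrightarrow> wires_after n v q = wires_after n v p + (q - p)"
proof (induction v arbitrary: p q rule: rev_induct)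
  case (snoc i v)
  then show ?case
    using cover_swap_shift[OF snoc.prems, of i] snoc.IH[of "cover_swap n i q" "cover_swap n i p"]
    by simp
qed simp

lemma position_after_shift:
  "int n dvd (q - p) \<Longrightarrow> position_after n v q = position_after n v p + (q - p)"
proof (induction v rule: rev_induct)
  case (snoc i v)
  then show ?case using cover_swap_shift[of n "position_after n v q" "position_after n v p" i]
    by simp
qed simp

lemma position_after_take_Suc:
  "t < length w \<Longrightarrow>
    position_after n (take (Suc t) w) = cover_swap n (w ! t) \<circ> position_after n (take t w)"
  by (simp add: take_Suc_conv_app_nth)

section \<open>Projection to the cylinder, glides and the trajectory\<close>

lemma cyl_wire_bounds: "1 \<le> n \<Longrightarrow> cyl_wire n p \<in> {1..n}"
proof -
  assume "1 \<le> n"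
  then have "0 \<le> (p - 1) mod int n" "(p - 1) mod int n < int n" by simp_all
  then show ?thesis unfolding cyl_wire_def by (simp add: Suc_le_eq nat_less_iff)
qed

lemma cyl_wire_dvd: "1 \<le> n \<Longrightarrow> int n dvd (p - int (cyl_wire n p))"
proof -
  assume "1 \<le> n"
  then have "p - int (cyl_wire n p) = (p - 1) - (p - 1) mod int n"
    by (simp add: cyl_wire_def)
  then show ?thesis by (simp add: minus_mod_eq_mult_div)
qed

lemma cyl_wire_eqI:
  assumes "c \<in> {1..n}" and "int n dvd (p - int c)"
  shows "cyl_wire n p = c"
proof -
  have "(p - 1) mod int n = (int c - 1) mod int n"
    using assms(2) by (simp add: mod_eq_dvd_iff)
  also have "\<dots> = int c - 1" using assms(1) by simp
  finally show ?thesis using assms(1) by (simp add: cyl_wire_def nat_diff_distrib)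
qed

lemma cyl_wire_shift: "int n dvd d \<Longrightarrow> cyl_wire n (p + d) = cyl_wire n p"
proof -
  assume "int n dvd d"
  then have "(p + d - 1) mod int n = (p - 1) mod int n" by (simp add: mod_eq_dvd_iff)
  then show ?thesis by (simp add: cyl_wire_def)
qed

lemma cyl_wire_cover_swap:
  assumes "2 \<le> n" and "i < n"
  shows "cyl_wire n (cover_swap n i p) = phi_gen n i (cyl_wire n p)"
proof -
  define c where "c = cyl_wire n p"
  have c: "c \<in> {1..n}" "int n dvd (p - int c)"
    using cyl_wire_bounds cyl_wire_dvd assms(1) unfolding c_def by auto
  have cyl_near: "cyl_wire n (p + e) = cyl_wire n (int c + e)" for e
    using cyl_wire_shift[OF c(2), of "int c + e"] by (simp add: add.commute)
  define lo where "lo = (if i = 0 then n else i)"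
  have "int n dvd (p - int i) \<longleftrightarrow> int n dvd (int c - int lo)"
    using dvd_shift_iff[OF c(2), of "int i"] dvd_add_right_iff[of "int n" "int n" "int c - int n"]
    by (simp add: lo_def)
  also have "\<dots> \<longleftrightarrow> c = lo"
    using int_dvd_small_iff[of "int c - int lo" n] c(1) assms by (auto simp: lo_def)
  finally have at_lo: "int n dvd (p - int i) \<longleftrightarrow> c = lo" .
  have "int n dvd (p - 1 - int i) \<longleftrightarrow> int n dvd (int c - 1 - int i)"
    using dvd_shift_iff[OF c(2), of "1 + int i"] by (simp add: algebra_simps)
  also have "\<dots> \<longleftrightarrow> c = i + 1"
    using int_dvd_small_iff[of "int c - 1 - int i" n] c(1) assms by (auto simp: abs_less_iff)
  finally have at_hi: "int n dvd (p - 1 - int i) \<longleftrightarrow> c = i + 1" .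
  consider "c = lo" | "c = i + 1" | "c \<noteq> lo" "c \<noteq> i + 1" by blast
  then show ?thesis
  proof cases
    case 1
    then have "cyl_wire n (int c + 1) = (if i = 0 then 1 else i + 1)"
      using assms by (intro cyl_wire_eqI) (auto simp: lo_def)
    then show ?thesis
      using 1 at_lo cyl_near[of 1] by (simp add: cover_swap_def phi_gen_def c_def lo_def)
  next
    case 2
    then have "lo \<noteq> c" using assms by (auto simp: lo_def)
    moreover have "cyl_wire n (int c - 1) = (if i = 0 then n else i)"
      using 2 assms by (intro cyl_wire_eqI) auto
    ultimately show ?thesis
      using 2 at_lo at_hi cyl_near[of "- 1"] by (simp add: cover_swap_def phi_gen_def c_def)
  next
    case 3
    then have "phi_gen n i c = c" using c(1) by (auto simp: phi_gen_def lo_def)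
    then show ?thesis using 3 at_lo at_hi by (simp add: cover_swap_def c_def)
  qed
qed

lemma phi_word_snoc: "phi_word n (v @ [i]) = phi_word n v \<circ> phi_gen n i"
  by (induction v) (simp_all add: phi_word_def comp_assoc)

lemma cyl_wire_wires_after:
  assumes "2 \<le> n" and "word n v"
  shows "cyl_wire n (wires_after n v p) = phi_word n v (cyl_wire n p)"
  using assms(2)
proof (induction v arbitrary: p rule: rev_induct)
  case (snoc i v)
  then have "word n v" "i < n" by (auto simp: word_def)
  then show ?case
    using snoc.IH cyl_wire_cover_swap[OF assms(1)] by (simp add: phi_word_snoc)
qed (simp add: phi_word_def)

lemma glide_wires_after_cong:
  assumes n: "2 \<le> n" and "word n w" and "is_glide n w"
  obtains k where "\<And>p. int n dvd (wires_after n w p - p - k)"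
proof -
  obtain k where k: "\<And>j. j \<in> {1..n} \<Longrightarrow> phi_word n w j mod n = (j + k) mod n"
    using assms(3) unfolding is_glide_def by blast
  have "int n dvd (wires_after n w p - p - int k)" for p
  proof -
    define c where "c = cyl_wire n p"
    have c: "c \<in> {1..n}" "int n dvd (p - int c)"
      using cyl_wire_bounds cyl_wire_dvd n unfolding c_def by auto
    have image: "int n dvd (wires_after n w p - int (phi_word n w c))"
      using cyl_wire_dvd[of n "wires_after n w p"] cyl_wire_wires_after[OF n assms(2)] n
      by (simp add: c_def)
    have "int (phi_word n w c) mod int n = (int c + int k) mod int n"
      using k[OF c(1)] by (metis of_nat_add of_nat_mod)
    then have glide: "int n dvd (int (phi_word n w c) - int c - int k)"
      by (simp add: mod_eq_dvd_iff algebra_simps)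
    show ?thesis
      using dvd_diff[OF dvd_add[OF image glide] c(2)] by (simp add: algebra_simps)
  qed
  then show ?thesis by (rule that)
qed

definition displacement :: "nat \<Rightarrow> nat list \<Rightarrow> int \<Rightarrow> int" where
  "displacement n w b = position_after n w b - b"

lemma displacement_shift:
  "int n dvd (a - b) \<Longrightarrow> displacement n w a = displacement n w b"
  unfolding displacement_def using position_after_shift[of n a b w] by simp

lemma glide_displacement_cong:
  assumes n: "2 \<le> n" and "word n w" and "is_glide n w"
  shows "int n dvd (displacement n w a - displacement n w b)"
proof -
  obtain k where k: "\<And>p. int n dvd (wires_after n w p - p - k)"
    using glide_wires_after_cong[OF assms] by blast
  have "int n dvd (- displacement n w b - k)" for b
    using k[of "position_after n w b"]
    by (simp add: wires_after_position_after[OF n] displacement_def)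
  from dvd_diff[OF this[of b] this[of a]] show ?thesis by (simp add: algebra_simps)
qed

lemma chamber_label_eq:
  assumes n: "2 \<le> n" and i: "i \<in> {1..n}"
    and below: "\<And>b. int n dvd (b - int i) \<Longrightarrow> b \<in> W ` {..q} \<longleftrightarrow> b \<le> 1 + int n * c"
  shows "chamber_label n W q i = c + (if i = 1 then 1 else 0)"
proof -
  \<comment> \<open>the largest label congruent to \<open>i\<close> below the chamber\<close>
  define b0 where "b0 = int n * c + (if i = 1 then 1 else int i - int n)"
  have b0: "int n dvd (b0 - int i)" "b0 \<in> W ` {..q}"
    using below i unfolding b0_def by (auto simp: algebra_simps)
  have "(GREATEST b. b \<in> W ` {..q} \<and> b mod int n = int i mod int n) = b0"
  proof (rule Greatest_equality)
    fix b assume b: "b \<in> W ` {..q} \<and> b mod int n = int i mod int n"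
    then have "int n dvd (b - b0)"
      using dvd_diff[OF _ b0(1), of "b - int i"] by (simp add: mod_eq_dvd_iff)
    then obtain m where m: "b - b0 = int n * m" by (elim dvdE)
    have "b \<le> 1 + int n * c" using below b by (auto simp: mod_eq_dvd_iff)
    then have "b - b0 < int n" using i by (auto simp: b0_def split: if_splits)
    then have "int n * m < int n * 1" unfolding m by (simp only: mult_1_right)
    then have "m \<le> 0" using mult_less_cancel_left_pos[of "int n" m 1] n by simp
    then have "int n * m \<le> 0" by (simp add: mult_nonneg_nonpos)
    then show "b \<le> b0" using m by simp
  qed (use b0 in \<open>simp add: mod_eq_dvd_iff\<close>)
  moreover have "\<lceil>real_of_int b0 / real n\<rceil> = c + (if i = 1 then 1 else 0)"
  proof (rule ceiling_unique)
    have "real_of_int b0 / real n = c + (if i = 1 then 1 else real i - real n) / real n"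
      using n by (simp add: b0_def field_simps)
    moreover have "(if i = 1 then 1 else real i - real n) / real n \<in> (if i = 1 then {0<..1} else {-1<..0})"
      using n i by (auto simp: field_simps)
    ultimately show "real_of_int (c + (if i = 1 then 1 else 0)) - 1 < real_of_int b0 / real n"
      and "real_of_int b0 / real n \<le> real_of_int (c + (if i = 1 then 1 else 0))"
      by (auto split: if_splits)
  qed
  ultimately show ?thesis by (simp add: chamber_label_def)
qed

lemma traj_eq_displacement:
  assumes n: "2 \<le> n" and w: "word n w" "is_glide n w" and i: "i \<in> {1..n}"
  shows "int n * traj n w i = displacement n w 1 - displacement n w (int i)"
proof -
  obtain c where c: "displacement n w 1 - displacement n w (int i) = int n * c"
    using glide_displacement_cong[OF n w] by (meson dvdE)
  have start: "chamber_label n id 1 i = 0 + (if i = 1 then 1 else 0)"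
    by (rule chamber_label_eq[OF n i]) auto
  have "(THE q. wires_after n w q = 1) = position_after n w 1"
    by (rule the_equality) (metis wires_after_position_after[OF n] position_after_wires_after[OF n])+
  moreover have "chamber_label n (wires_after n w) (position_after n w 1) i
      = c + (if i = 1 then 1 else 0)"
  proof (rule chamber_label_eq[OF n i])
    fix b assume b: "int n dvd (b - int i)"
    have "b \<in> wires_after n w ` {..position_after n w 1}
        \<longleftrightarrow> position_after n w b \<le> position_after n w 1"
    proof
      assume "b \<in> wires_after n w ` {..position_after n w 1}"
      then show "position_after n w b \<le> position_after n w 1"
        using position_after_wires_after[OF n] by auto
    next
      assume "position_after n w b \<le> position_after n w 1"
      then show "b \<in> wires_after n w ` {..position_after n w 1}"
        using wires_after_position_after[OF n, of w b, symmetric] by blast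
    qed
    also have "position_after n w b = position_after n w (int i) + (b - int i)"
      using position_after_shift[OF b] .
    finally show "b \<in> wires_after n w ` {..position_after n w 1} \<longleftrightarrow> b \<le> 1 + int n * c"
      using c by (auto simp: displacement_def algebra_simps)
  qed
  ultimately show ?thesis using start c by (simp add: traj_def)
qed

lemma traj_le_iff:
  assumes "2 \<le> n" and "word n w" "is_glide n w" and "i \<in> {1..n}" "j \<in> {1..n}"
  shows "traj n w j \<le> traj n w i \<longleftrightarrow> displacement n w (int i) \<le> displacement n w (int j)"
proof -
  have "traj n w j \<le> traj n w i \<longleftrightarrow> int n * traj n w j \<le> int n * traj n w i"
    using assms(1) by simp
  then show ?thesis using traj_eq_displacement[OF assms(1-3)] assms(4,5) by simp
qed

section \<open>Reduced words have ascending crossings\<close>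

lemma hat_step_append: "hat_step n x y \<Longrightarrow> hat_step n (x @ c) (y @ c)"
proof (induction rule: hat_step.induct)
  case (square a i b) then show ?case using hat_step.square[of n a i "b @ c"] by simp
next
  case (braid i j a b) then show ?case using hat_step.braid[of i j n a "b @ c"] by simp
next
  case (comm i j a b) then show ?case using hat_step.comm[of i j n a "b @ c"] by simp
qed

lemma hat_eq_append: "hat_eq n x y \<Longrightarrow> hat_eq n (x @ c) (y @ c)"
  unfolding hat_eq_def
proof (induction rule: rtranclp_induct)
  case (step y z)
  then show ?case using hat_step_append by (auto intro: rtranclp.rtrancl_into_rtrancl)
qed simp

lemma hat_eq_refl: "hat_eq n x x"
  by (simp add: hat_eq_def)

lemma hat_eq_trans: "hat_eq n x y \<Longrightarrow> hat_eq n y z \<Longrightarrow> hat_eq n x z"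
  unfolding hat_eq_def by (rule rtranclp_trans)

lemma hat_eq_step: "hat_step n x y \<Longrightarrow> hat_eq n x y"
  and hat_eq_step_rev: "hat_step n y x \<Longrightarrow> hat_eq n x y"
  unfolding hat_eq_def by (auto intro: r_into_rtranclp)

lemma word_snoc [simp]: "word n (v @ [i]) \<longleftrightarrow> word n v \<and> i < n"
  by (auto simp: word_def)

definition ascending_at :: "nat \<Rightarrow> (int \<Rightarrow> int) \<Rightarrow> nat \<Rightarrow> bool" where
  "ascending_at n W i \<longleftrightarrow> (\<forall>p. int n dvd (p - int i) \<longrightarrow> W p < W (p + 1))"

text \<open>Every crossing passes a wire below one with a larger label, i.e.\ creates an inversion.\<close>

definition crossings_ascending :: "nat \<Rightarrow> nat list \<Rightarrow> bool" where
  "crossings_ascending n v \<longleftrightarrow>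
     (\<forall>t<length v. ascending_at n (wires_after n (take t v)) (v ! t))"

lemma crossings_ascending_snoc [simp]:
  "crossings_ascending n (v @ [i]) \<longleftrightarrow>
     crossings_ascending n v \<and> ascending_at n (wires_after n v) i"
  by (auto simp: crossings_ascending_def nth_append less_Suc_eq)

lemma ascending_at_iff:
  assumes "int n dvd (p - int i)"
  shows "ascending_at n (wires_after n v) i \<longleftrightarrow> wires_after n v p < wires_after n v (p + 1)"
proof
  assume asc: "wires_after n v p < wires_after n v (p + 1)"
  show "ascending_at n (wires_after n v) i"
    unfolding ascending_at_def
  proof (intro allI impI)
    fix q assume "int n dvd (q - int i)"
    then have "int n dvd (q - p)"
      using dvd_diff[OF _ assms, of "q - int i"] by simp
    then show "wires_after n v q < wires_after n v (q + 1)"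
      using wires_after_shift[of n q p v] wires_after_shift[of n "q + 1" "p + 1" v] asc by simp
  qed
qed (use assms in \<open>simp add: ascending_at_def\<close>)

text \<open>The exchange property for the last letter \<open>i\<close>, keeping the shorter word ascending.\<close>

definition has_exchange :: "nat \<Rightarrow> nat list \<Rightarrow> nat \<Rightarrow> bool" where
  "has_exchange n v i \<longleftrightarrow> (\<exists>v'. word n v' \<and> crossings_ascending n v' \<and> length v' + 1 = length v \<and>
     hat_eq n v (v' @ [i]) \<and> wires_after n v' = wires_after n v \<circ> cover_swap n i)"

lemma has_exchange_commute:
  assumes n: "2 \<le> n" and far: "(int i - int j) mod int n \<notin> {0, 1, int n - 1}"
    and v: "crossings_ascending n (u @ [j])" "j < n"
    and ex: "has_exchange n u i"
  shows "has_exchange n (u @ [j]) i"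
proof -
  obtain u' where u': "word n u'" "crossings_ascending n u'" "length u' + 1 = length u"
      "hat_eq n u (u' @ [i])" "wires_after n u' = wires_after n u \<circ> cover_swap n i"
    using ex unfolding has_exchange_def by blast
  have "ascending_at n (wires_after n u') j"
    unfolding ascending_at_def
  proof (intro allI impI)
    fix q assume q: "int n dvd (q - int j)"
    have "cover_swap n i q = q" "cover_swap n i (q + 1) = q + 1"
      using cover_swap_far_fixes[OF n far_letters_sym[OF n far]] cover_swap_at[OF q] q by auto
    moreover have "wires_after n u q < wires_after n u (q + 1)"
      using v(1) q by (simp add: ascending_at_def)
    ultimately show "wires_after n u' q < wires_after n u' (q + 1)" using u'(5) by simp
  qed
  moreover have "hat_eq n (u @ [j]) ((u' @ [j]) @ [i])"
    using hat_eq_append[OF u'(4), of "[j]"] hat_eq_step[OF hat_step.comm[OF far, of u' "[]"]]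
    by (auto intro: hat_eq_trans)
  moreover have "wires_after n (u' @ [j]) = wires_after n (u @ [j]) \<circ> cover_swap n i"
    using u'(5) cover_swap_commute[OF n far] by (auto simp: fun_eq_iff)
  ultimately show ?thesis
    unfolding has_exchange_def using u' v by (intro exI[of _ "u' @ [j]"]) auto
qed

lemma adjacent_letters_cases:
  assumes n: "2 \<le> n" and adj: "(int i - int j) mod int n \<in> {1, int n - 1}"
  obtains "int n dvd (int i - int j - 1)" | "int n dvd (int j - int i - 1)"
proof (cases "(int i - int j) mod int n = 1")
  case True
  then show ?thesis using that(1) n int_mod_eq_iff_dvd[of 1 "int n" "int i - int j"] by simp
next
  case False
  then have "(int i - int j) mod int n = (- 1) mod int n" using adj n zmod_minus1 by simp
  then have "int n dvd (- (int j - int i - 1))" by (simp add: mod_eq_dvd_iff algebra_simps)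
  then show ?thesis using that(2) by (simp only: dvd_minus_iff)
qed

lemma has_exchange_of_braid:
  assumes n: "2 \<le> n" and adj: "(int i - int j) mod int n \<in> {1, int n - 1}"
    and braid: "\<And>r. cover_swap n i (cover_swap n j (cover_swap n i r))
                     = cover_swap n j (cover_swap n i (cover_swap n j r))"
    and u1: "length u1 + 1 = length u" "hat_eq n u (u1 @ [i])"
      "wires_after n u1 = wires_after n u \<circ> cover_swap n i"
    and u2: "word n u2" "length u2 + 1 = length u1" "hat_eq n u1 (u2 @ [j])"
      "wires_after n u2 = wires_after n u1 \<circ> cover_swap n j"
    and u2ij: "i < n" "j < n" "crossings_ascending n (u2 @ [i, j])"
  shows "has_exchange n (u @ [j]) i"
proof -
  have "hat_eq n (u @ [j]) (u2 @ [j, i, j])"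
    using hat_eq_append[OF u1(2), of "[j]"] hat_eq_append[OF u2(3), of "[i, j]"]
    by (auto intro: hat_eq_trans)
  moreover have "hat_step n (u2 @ [i, j, i] @ []) (u2 @ [j, i, j] @ [])"
    using adj by (intro hat_step.braid) auto
  ultimately have "hat_eq n (u @ [j]) ((u2 @ [i, j]) @ [i])"
    by (auto intro: hat_eq_trans hat_eq_step_rev)
  moreover have "wires_after n (u2 @ [i, j]) = wires_after n (u @ [j]) \<circ> cover_swap n i"
    using u1(3) u2(4) braid[of "cover_swap n j r" for r]
    by (simp add: fun_eq_iff wires_after_append wires_after_Cons cover_swap_involution[OF n])
  moreover have "word n (u2 @ [i, j])" using u2(1) u2ij by (simp add: word_def)
  ultimately show ?thesis
    unfolding has_exchange_def using u1 u2 u2ij by (intro exI[of _ "u2 @ [i, j]"]) auto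
qed

lemma has_exchange_braid:
  assumes n: "2 \<le> n" and adj: "(int i - int j) mod int n \<in> {1, int n - 1}"
    and v: "word n (u @ [j])" "crossings_ascending n (u @ [j])" "i < n"
    and p: "int n dvd (p - int i)" "wires_after n (u @ [j]) (p + 1) < wires_after n (u @ [j]) p"
    and IH: "\<And>u' i' p'. length u' < length (u @ [j]) \<Longrightarrow> word n u' \<Longrightarrow>
      crossings_ascending n u' \<Longrightarrow> i' < n \<Longrightarrow> int n dvd (p' - int i') \<Longrightarrow>
      wires_after n u' (p' + 1) < wires_after n u' p' \<Longrightarrow> has_exchange n u' i'"
  shows "has_exchange n (u @ [j]) i"
proof -
  obtain a b where ab: "(a = j \<and> b = i) \<or> (a = i \<and> b = j)" and ba: "int n dvd (int b - int a - 1)"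
    by (rule adjacent_letters_cases[OF n adj]) blast+
  have "a \<noteq> b" using ba n int_dvd_small_iff[of "-1" n] by auto
  \<comment> \<open>\<open>s\<^sub>a\<close>, \<open>s\<^sub>b\<close> swap positions \<open>r, r+1\<close> resp.\ \<open>r+1, r+2\<close>, where the wires are in decreasing order;
    twice the induction hypothesis moves \<open>s\<^sub>i\<close> and \<open>s\<^sub>j\<close> to the end, then the braid relation applies\<close>
  define Wv where "Wv = wires_after n (u @ [j])"
  define r where "r = (if i = a then p else p - 1)"
  define pos where "pos x = (if x = a then r else r + 1)" for x
  have pos: "int n dvd (pos x - int x)" if "x \<in> {a, b}" for x
    using that p(1) ab dvd_add[OF p(1) ba] dvd_diff[OF p(1) ba] \<open>a \<noteq> b\<close>
    by (auto simp: pos_def r_def algebra_simps)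
  then have pos_ij: "int n dvd (pos i - int i)" "int n dvd (pos j - int j)" using ab by auto
  have Wu: "wires_after n u = Wv \<circ> cover_swap n j"
    by (auto simp: Wv_def fun_eq_iff cover_swap_involution[OF n])
  have "wires_after n u (pos j) < wires_after n u (pos j + 1)"
    using v(2) pos_ij(2) by (auto simp: ascending_at_def)
  then have j_desc: "Wv (pos j + 1) < Wv (pos j)"
    using pos_ij(2) cover_swap_at cover_swap_at_Suc[OF n] by (auto simp: Wv_def)
  have desc: "Wv (r + 1) < Wv r" "Wv (r + 2) < Wv (r + 1)"
    using j_desc p(2) ab \<open>a \<noteq> b\<close> by (auto simp: Wv_def pos_def r_def ac_simps)
  have n3: "3 \<le> n"
  proof (rule ccontr)
    assume "\<not> 3 \<le> n"
    then have "n = 2" using n by simp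
    then have "Wv (r + 2) = Wv r + 2"
      unfolding Wv_def using wires_after_shift[of n "r + 2" r "u @ [j]"] by simp
    then show False using desc by simp
  qed
  have "int n dvd (r - int a)" using pos[of a] by (simp add: pos_def)
  note block = cover_swap_adjacent_values[OF n3 this ba]
  have "wires_after n u (p + 1) < wires_after n u p"
    using desc ab block \<open>a \<noteq> b\<close> by (auto simp: Wu r_def ac_simps)
  then obtain u1 where u1: "word n u1" "crossings_ascending n u1" "length u1 + 1 = length u"
      "hat_eq n u (u1 @ [i])" "wires_after n u1 = wires_after n u \<circ> cover_swap n i"
    using IH[of u i p] v p(1) unfolding has_exchange_def by auto
  have "wires_after n u1 (pos j + 1) < wires_after n u1 (pos j)"
    using desc ab block \<open>a \<noteq> b\<close> by (auto simp: u1(5) Wu pos_def r_def ac_simps)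
  then obtain u2 where u2: "word n u2" "crossings_ascending n u2" "length u2 + 1 = length u1"
      "hat_eq n u1 (u2 @ [j])" "wires_after n u2 = wires_after n u1 \<circ> cover_swap n j"
    using IH[of u1 j "pos j"] u1 v pos_ij(2) unfolding has_exchange_def by auto
  have "ascending_at n (wires_after n u2) i"
    unfolding ascending_at_iff[OF pos_ij(1)]
    using desc ab block \<open>a \<noteq> b\<close> by (auto simp: u2(5) u1(5) Wu pos_def r_def ac_simps)
  moreover have "ascending_at n (wires_after n (u2 @ [i])) j"
    unfolding ascending_at_iff[OF pos_ij(2)]
    using desc ab block \<open>a \<noteq> b\<close> by (auto simp: u2(5) u1(5) Wu pos_def r_def ac_simps)
  ultimately have "crossings_ascending n ((u2 @ [i]) @ [j])"
    unfolding crossings_ascending_snoc using u2(2) by blast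
  moreover have "\<And>r. cover_swap n i (cover_swap n j (cover_swap n i r))
                     = cover_swap n j (cover_swap n i (cover_swap n j r))"
    using cover_swap_braid[OF n3 ba] ab by auto
  ultimately show ?thesis
    using has_exchange_of_braid[OF n adj _ u1(3-5) u2(1,3-5)] v by auto
qed

lemma has_exchange_of_descent:
  assumes n: "2 \<le> n"
  shows "word n v \<Longrightarrow> crossings_ascending n v \<Longrightarrow> i < n \<Longrightarrow> int n dvd (p - int i) \<Longrightarrow>
    wires_after n v (p + 1) < wires_after n v p \<Longrightarrow> has_exchange n v i"
proof (induction v arbitrary: i p rule: length_induct)
  case (1 v)
  show ?case
  proof (cases v rule: rev_exhaust)
    case (snoc u j)
    have u: "word n u" "crossings_ascending n u" "j < n" using "1.prems"(1,2) snoc by auto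
    have IH: "\<And>u' i' p'. length u' < length (u @ [j]) \<Longrightarrow> word n u' \<Longrightarrow>
      crossings_ascending n u' \<Longrightarrow> i' < n \<Longrightarrow> int n dvd (p' - int i') \<Longrightarrow>
      wires_after n u' (p' + 1) < wires_after n u' p' \<Longrightarrow> has_exchange n u' i'"
      using "1.IH" snoc by blast
    have "(int i - int j) mod int n = 0 \<Longrightarrow> i = j"
      using "1.prems"(3) u(3) int_dvd_small_iff[of "int i - int j" n] by (auto simp: mod_eq_0_iff_dvd)
    then consider "i = j" | "(int i - int j) mod int n \<in> {1, int n - 1}"
      | "(int i - int j) mod int n \<notin> {0, 1, int n - 1}"
      by (cases "(int i - int j) mod int n = 0") auto
    then show ?thesis
    proof cases
      case 1
      then show ?thesis
        unfolding has_exchange_def snoc using u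
        by (intro exI[of _ u]) (auto simp: hat_eq_refl fun_eq_iff cover_swap_involution[OF n])
    next
      case 2
      show ?thesis
        unfolding snoc by (rule has_exchange_braid[OF n 2]) (use "1.prems" snoc IH in auto)
    next
      case 3
      have "cover_swap n j p = p" "cover_swap n j (p + 1) = p + 1"
        using cover_swap_far_fixes[OF n 3] cover_swap_at[OF "1.prems"(4)] "1.prems"(4) by auto
      then have "has_exchange n u i"
        using IH[of u i p] u "1.prems" snoc by simp
      then show ?thesis using has_exchange_commute[OF n 3] u "1.prems"(2) snoc by blast
    qed
  qed (use "1.prems" in simp)
qed

lemma reduced_word_ascending_at:
  assumes n: "2 \<le> n" and r: "reduced_word n w" and t: "t < length w"
    and asc: "crossings_ascending n (take t w)"
  shows "ascending_at n (wires_after n (take t w)) (w ! t)"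
proof (rule ccontr)
  define x where "x = w ! t"
  define W where "W = wires_after n (take t w)"
  have wd: "word n w" using r by (simp add: reduced_word_def)
  then have x: "x < n" "word n (take t w)"
    using t by (auto simp: word_def x_def dest: in_set_takeD)
  assume "\<not> ascending_at n (wires_after n (take t w)) (w ! t)"
  then obtain p where p: "int n dvd (p - int x)" "\<not> W p < W (p + 1)"
    unfolding ascending_at_def W_def x_def by blast
  moreover have "W p \<noteq> W (p + 1)"
    using position_after_wires_after[OF n, of "take t w"] unfolding W_def by (metis add_cancel_left_right one_neq_zero)
  ultimately have "W (p + 1) < W p" by simp
  then obtain v' where v': "word n v'" "length v' + 1 = t" "hat_eq n (take t w) (v' @ [x])"
    using has_exchange_of_descent[OF n x(2) asc x(1) p(1)] t
    unfolding has_exchange_def W_def by auto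
  define rest where "rest = drop (Suc t) w"
  have "w = take t w @ [x] @ rest"
    unfolding rest_def x_def using id_take_nth_drop[OF t] by simp
  then have "hat_eq n w (v' @ [x, x] @ rest)"
    using hat_eq_append[OF v'(3), of "[x] @ rest"] by simp
  then have "hat_eq n w (v' @ rest)"
    using hat_eq_trans hat_eq_step[OF hat_step.square] by blast
  moreover have "word n (v' @ rest)"
    using v'(1) wd unfolding word_def rest_def by (auto dest: in_set_dropD)
  ultimately have "length w \<le> length (v' @ rest)" using r unfolding reduced_word_def by blast
  then show False using v'(2) t by (simp add: rest_def)
qed

lemma reduced_word_crossings_ascending:
  assumes n: "2 \<le> n" and r: "reduced_word n w"
  shows "crossings_ascending n w"
proof -
  have "crossings_ascending n (take t w)" if "t \<le> length w" for t
    using that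
  proof (induction t)
    case (Suc t)
    then show ?case
      using reduced_word_ascending_at[OF n r, of t] by (simp add: take_Suc_conv_app_nth)
  qed (simp add: crossings_ascending_def)
  from this[of "length w"] show ?thesis by simp
qed

section \<open>Crossing parameters and displacements\<close>

lemma crossing_swaps_pair:
  assumes n: "2 \<le> n" and t: "t < length w"
    and before: "position_after n (take t w) A < position_after n (take t w) B"
    and after: "\<not> position_after n (take (Suc t) w) A < position_after n (take (Suc t) w) B"
  shows "position_after n (take t w) B = position_after n (take t w) A + 1
    \<and> int n dvd (position_after n (take t w) A - int (w ! t))"
proof -
  define f where "f = position_after n (take t w)"
  have "A \<noteq> B" using before by auto
  then have "cover_swap n (w ! t) (f A) \<noteq> cover_swap n (w ! t) (f B)"
    using position_after_take_Suc[OF t, of n] position_after_wires_after[OF n]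
      wires_after_position_after[OF n, of "take (Suc t) w"] unfolding f_def
    by (metis comp_apply)
  then have "cover_swap n (w ! t) (f B) < cover_swap n (w ! t) (f A)"
    using after position_after_take_Suc[OF t, of n] unfolding f_def by auto
  then show ?thesis
    using cover_swap_reverses_only_adjacent before unfolding f_def by blast
qed

lemma crossing_wires_at:
  assumes "int n dvd (q - int (w ! t))"
  shows "upper_wire n w t = cyl_wire n (wires_after n (take t w) (q + 1))"
    and "lower_wire n w t = cyl_wire n (wires_after n (take t w) q)"
proof -
  have "int n dvd (cross_pos n (w ! t) - q)"
    using dvd_diff[of "int n" "cross_pos n (w ! t) - int (w ! t)", OF _ assms]
    by (simp add: cross_pos_def)
  then have "int n dvd (cross_pos n (w ! t) + c - (q + c))" for c by simp
  then have "wires_after n (take t w) (cross_pos n (w ! t) + c)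
      = wires_after n (take t w) (q + c) + (cross_pos n (w ! t) - q)" for c
    using wires_after_shift by fastforce
  from this[of 1] this[of 0] show
    "upper_wire n w t = cyl_wire n (wires_after n (take t w) (q + 1))"
    "lower_wire n w t = cyl_wire n (wires_after n (take t w) q)"
    unfolding upper_wire_def lower_wire_def
    using cyl_wire_shift \<open>int n dvd (cross_pos n (w ! t) - q)\<close> by simp_all
qed

lemma displacement_le_of_crossing_params_pos:
  assumes n: "2 \<le> n" and w: "word n w" "is_glide n w"
    and pos: "\<forall>t<length w. crossing_param n \<alpha> w t > 0"
    and ab: "a \<in> {1..n}" "b \<in> {1..n}" "\<alpha> a > \<alpha> b"
  shows "displacement n w (int a) \<le> displacement n w (int b)"
proof (rule ccontr)
  assume "\<not> ?thesis"
  moreover obtain m where m: "displacement n w (int a) - displacement n w (int b) = int n * m"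
    using glide_displacement_cong[OF n w] by (meson dvdE)
  ultimately have "0 < int n * m" by linarith
  then have "1 \<le> m" by (simp add: zero_less_mult_iff)
  then have "int n * 1 \<le> int n * m" by (intro mult_left_mono) auto
  then have far: "displacement n w (int b) + int n \<le> displacement n w (int a)"
    using m by simp
  define A where "A = int a"
  define B where "B = (if a < b then int b else int b + int n)"
  have "a \<noteq> b" using ab(3) by auto
  then have AB: "A < B" "B < A + int n" using ab unfolding A_def B_def by auto
  have "displacement n w B = displacement n w (int b)"
    by (rule displacement_shift) (simp add: B_def)
  define Q where "Q t \<longleftrightarrow> position_after n (take t w) A < position_after n (take t w) B" for t
  have "\<not> Q (length w)"
    using \<open>displacement n w B = _\<close> far AB unfolding Q_def A_def by (simp add: displacement_def)
  moreover have "Q 0" using AB by (simp add: Q_def)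
  ultimately obtain t where t: "t < length w" "Q t" "\<not> Q (Suc t)"
    using ex_least_nat_less[of "\<lambda>t. \<not> Q t" "length w"] by auto
  define q where "q = position_after n (take t w) A"
  have q: "position_after n (take t w) B = q + 1" "int n dvd (q - int (w ! t))"
    using crossing_swaps_pair[OF n t(1)] t(2,3) unfolding q_def Q_def by auto
  have "wires_after n (take t w) q = A" "wires_after n (take t w) (q + 1) = B"
    using wires_after_position_after[OF n] q(1) unfolding q_def by metis+
  then have "upper_wire n w t = b" "lower_wire n w t = a"
    using crossing_wires_at[OF q(2)] ab cyl_wire_eqI unfolding A_def B_def by auto
  then show False using pos t(1) ab(3) by (auto simp: crossing_param_def)
qed

lemma crossed_pair_stays_crossed:
  assumes n: "2 \<le> n" and asc: "crossings_ascending n w" and LU: "L < U"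
    and ts: "t \<le> s" "s \<le> length w"
    and crossed: "position_after n (take t w) U < position_after n (take t w) L"
  shows "position_after n (take s w) U < position_after n (take s w) L"
  using ts
proof (induction s rule: dec_induct)
  case (step s)
  show ?case
  proof (rule ccontr)
    assume "\<not> ?case"
    then have s: "position_after n (take s w) L = position_after n (take s w) U + 1"
      "int n dvd (position_after n (take s w) U - int (w ! s))"
      using crossing_swaps_pair[OF n _ step.IH] step by auto
    have "ascending_at n (wires_after n (take s w)) (w ! s)"
      using asc step by (simp add: crossings_ascending_def)
    then have "wires_after n (take s w) (position_after n (take s w) U)
        < wires_after n (take s w) (position_after n (take s w) L)"
      using s unfolding ascending_at_def by metis
    then show False using LU by (simp add: wires_after_position_after[OF n])
  qed
qed (use crossed in simp)

lemma crossing_param_pos_of_displacement_mono: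
  assumes n: "2 \<le> n" and asc: "crossings_ascending n w" and t: "t < length w"
    and mono: "\<forall>a\<in>{1..n}. \<forall>b\<in>{1..n}. \<alpha> a > \<alpha> b \<longrightarrow> displacement n w (int a) \<le> displacement n w (int b)"
    and inj: "inj_on \<alpha> {1..n}"
  shows "crossing_param n \<alpha> w t > 0"
proof -
  define q where "q = cross_pos n (w ! t)"
  have q: "int n dvd (q - int (w ! t))" by (simp add: q_def cross_pos_def)
  define L where "L = wires_after n (take t w) q"
  define U where "U = wires_after n (take t w) (q + 1)"
  have "ascending_at n (wires_after n (take t w)) (w ! t)"
    using asc t by (simp add: crossings_ascending_def)
  then have LU: "L < U"
    using q unfolding L_def U_def ascending_at_def by blast
  have "position_after n (take (Suc t) w) U = q" "position_after n (take (Suc t) w) L = q + 1"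
    unfolding position_after_take_Suc[OF t] L_def U_def
    by (simp_all add: position_after_wires_after[OF n] cover_swap_at[OF q] cover_swap_at_Suc[OF n q])
  then have "position_after n w U < position_after n w L"
    using crossed_pair_stays_crossed[OF n asc LU, of "Suc t" "length w"] t by simp
  define l u where "l = cyl_wire n L" and "u = cyl_wire n U"
  have lu: "l \<in> {1..n}" "u \<in> {1..n}"
    using cyl_wire_bounds n unfolding l_def u_def by auto
  have "displacement n w L = displacement n w (int l)" "displacement n w U = displacement n w (int u)"
    using displacement_shift[OF cyl_wire_dvd[of n L]] displacement_shift[OF cyl_wire_dvd[of n U]] n
    unfolding l_def u_def by simp_all
  with \<open>position_after n w U < position_after n w L\<close> LU
  have "displacement n w (int u) < displacement n w (int l)"
    by (simp add: displacement_def)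
  then have "\<not> \<alpha> l > \<alpha> u" "l \<noteq> u"
    using mono lu by fastforce+
  then have "\<alpha> u > \<alpha> l"
    using inj_on_contraD[OF inj _ lu] by fastforce
  moreover have "upper_wire n w t = u" "lower_wire n w t = l"
    using crossing_wires_at[OF q] unfolding u_def l_def U_def L_def q_def by simp_all
  ultimately show ?thesis by (simp add: crossing_param_def)
qed

lemma crossing_params_pos_iff_displacement_mono:
  assumes n: "2 \<le> n" and w: "word n w" "is_glide n w" "crossings_ascending n w"
    and inj: "inj_on \<alpha> {1..n}"
  shows "(\<forall>t<length w. crossing_param n \<alpha> w t > 0) \<longleftrightarrow>
    (\<forall>a\<in>{1..n}. \<forall>b\<in>{1..n}. \<alpha> a > \<alpha> b \<longrightarrow> displacement n w (int a) \<le> displacement n w (int b))"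
proof (intro iffI)
  assume "\<forall>t<length w. crossing_param n \<alpha> w t > 0"
  then show "\<forall>a\<in>{1..n}. \<forall>b\<in>{1..n}. \<alpha> a > \<alpha> b \<longrightarrow> displacement n w (int a) \<le> displacement n w (int b)"
    using displacement_le_of_crossing_params_pos[OF n w(1,2)] by blast
qed (use crossing_param_pos_of_displacement_mono[OF n w(3) _ _ inj] in blast)

section \<open>Orders along a permutation\<close>

lemma chain_less_on_interval:
  fixes f :: "nat \<Rightarrow> 'a::order"
  assumes "\<And>i. m \<le> i \<Longrightarrow> i < k \<Longrightarrow> f (Suc i) < f i" and "m \<le> x" "x < y" "y \<le> k"
  shows "f y < f x"
  using assms(3,4)
proof (induction y)
  case (Suc y)
  have "f (Suc y) < f y" using assms(1)[of y] assms(2) Suc.prems by simp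
  moreover have "x < y \<Longrightarrow> f y < f x" using Suc by simp
  ultimately show ?case using Suc.prems(1) by (cases "x = y") (auto intro: less_trans)
qed simp

lemma chain_le_on_interval:
  fixes f :: "nat \<Rightarrow> 'a::order"
  assumes "\<And>i. m \<le> i \<Longrightarrow> i < k \<Longrightarrow> f i \<le> f (Suc i)" and "m \<le> x" "x \<le> y" "y \<le> k"
  shows "f x \<le> f y"
  using assms(3,4)
proof (induction y rule: dec_induct)
  case (step y)
  have "f y \<le> f (Suc y)" using assms(1)[of y] assms(2) step by simp
  with step show ?case by (simp add: order_trans)
qed simp

lemma permutation_chain_less:
  fixes \<alpha> :: "nat \<Rightarrow> 'a::order"
  assumes "\<forall>i\<in>{1..<n}. \<alpha> (\<pi> i) > \<alpha> (\<pi> (Suc i))"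
    and "x \<in> {1..n}" "y \<in> {1..n}" "x < y"
  shows "\<alpha> (\<pi> x) > \<alpha> (\<pi> y)"
  using chain_less_on_interval[of 1 n "\<alpha> \<circ> \<pi>" x y] assms by auto

lemma inj_on_of_permutation_chain:
  fixes \<alpha> :: "nat \<Rightarrow> 'a::order"
  assumes \<pi>: "\<pi> permutes {1..n}" and dec: "\<forall>i\<in>{1..<n}. \<alpha> (\<pi> i) > \<alpha> (\<pi> (Suc i))"
  shows "inj_on \<alpha> {1..n}"
proof -
  have "inj_on (\<alpha> \<circ> \<pi>) {1..n}"
    using permutation_chain_less[of n \<alpha> \<pi>] dec
    by (intro linorder_inj_onI') (metis comp_apply order_less_irrefl)
  then show ?thesis
    using comp_inj_on_iff[OF permutes_inj_on[OF \<pi>]] permutes_image[OF \<pi>] by metis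
qed

lemma permutation_chain_order_iff:
  fixes \<alpha> :: "nat \<Rightarrow> 'a::order" and g :: "nat \<Rightarrow> 'b::order"
  assumes \<pi>: "\<pi> permutes {1..n}" and dec: "\<forall>i\<in>{1..<n}. \<alpha> (\<pi> i) > \<alpha> (\<pi> (Suc i))"
  shows "(\<forall>a\<in>{1..n}. \<forall>b\<in>{1..n}. \<alpha> a > \<alpha> b \<longrightarrow> g a \<le> g b) \<longleftrightarrow>
    (\<forall>i\<in>{1..<n}. g (\<pi> i) \<le> g (\<pi> (Suc i)))"
proof
  assume "\<forall>a\<in>{1..n}. \<forall>b\<in>{1..n}. \<alpha> a > \<alpha> b \<longrightarrow> g a \<le> g b"
  then show "\<forall>i\<in>{1..<n}. g (\<pi> i) \<le> g (\<pi> (Suc i))"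
    using dec permutes_in_image[OF \<pi>] by auto
next
  assume "\<forall>i\<in>{1..<n}. g (\<pi> i) \<le> g (\<pi> (Suc i))"
  then have mono: "g (\<pi> x) \<le> g (\<pi> y)" if "x \<in> {1..n}" "y \<in> {1..n}" "x \<le> y" for x y
    using chain_le_on_interval[of 1 n "g \<circ> \<pi>" x y] that by auto
  show "\<forall>a\<in>{1..n}. \<forall>b\<in>{1..n}. \<alpha> a > \<alpha> b \<longrightarrow> g a \<le> g b"
  proof (intro ballI impI)
    fix a b assume ab: "a \<in> {1..n}" "b \<in> {1..n}" "\<alpha> a > \<alpha> b"
    obtain x y where xy: "x \<in> {1..n}" "y \<in> {1..n}" "a = \<pi> x" "b = \<pi> y"
      using ab(1,2) permutes_image[OF \<pi>] by (metis imageE)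
    then have "x \<le> y" using permutation_chain_less[of n \<alpha> \<pi> y x] dec ab(3) by fastforce
    then show "g a \<le> g b" using mono xy by simp
  qed
qed

theorem proposition7p4:
  fixes n :: nat and \<alpha> :: "nat \<Rightarrow> real" and \<pi> :: "nat \<Rightarrow> nat" and w :: "nat list"
  assumes "n \<ge> 2"
    and "\<pi> permutes {1..n}"
    and "\<forall>i\<in>{1..<n}. \<alpha> (\<pi> i) > \<alpha> (\<pi> (Suc i))"
    and "reduced_word n w"
    and "is_glide n w"
  shows "(\<forall>t<length w. crossing_param n \<alpha> w t > 0) \<longleftrightarrow>
         (\<forall>i\<in>{1..<n}. traj n w (\<pi> i) \<ge> traj n w (\<pi> (Suc i)))"
proof -
  have word: "word n w" using assms(4) by (simp add: reduced_word_def)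
  have "(\<forall>t<length w. crossing_param n \<alpha> w t > 0) \<longleftrightarrow>
      (\<forall>a\<in>{1..n}. \<forall>b\<in>{1..n}. \<alpha> a > \<alpha> b \<longrightarrow> displacement n w (int a) \<le> displacement n w (int b))"
    using crossing_params_pos_iff_displacement_mono[OF assms(1) word assms(5)
        reduced_word_crossings_ascending[OF assms(1,4)] inj_on_of_permutation_chain[OF assms(2,3)]] .
  also have "\<dots> \<longleftrightarrow> (\<forall>i\<in>{1..<n}. displacement n w (int (\<pi> i)) \<le> displacement n w (int (\<pi> (Suc i))))"
    using permutation_chain_order_iff[OF assms(2,3), of "\<lambda>a. displacement n w (int a)"] .
  also have "\<dots> \<longleftrightarrow> (\<forall>i\<in>{1..<n}. traj n w (\<pi> i) \<ge> traj n w (\<pi> (Suc i)))"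
    using traj_le_iff[OF assms(1) word assms(5)] permutes_in_image[OF assms(2)] by auto
  finally show ?thesis .
qed

end
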